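(* Let $G$ and $H$ be nontrivial finite groups. The cyclic graph $\Delta(G\times H)$ is disconnected if and only if there exists a prime $p$ such that $G$ contains an element of order $p$ whose centralizer in $G$ is a $p$-group and $H$ contains an element of order $p$ whose centralizer in $H$ is a $p$-group.
   Context: For a finite group $X$, the cyclic graph $\Delta(X)$ has vertex set $X^{\#}=X\setminus\{1\}$, and distinct vertices $x,y$ are adjacent if and only if the subgroup $\langle x,y\rangle$ is cyclic. *)

theory Defs
  imports "HOL-Algebra.Algebra"
begin

definition elem_centralizer :: "('a, 'b) monoid_scheme \<Rightarrow> 'a \<Rightarrow> 'a set" where
  "elem_centralizer M x = {g \<in> carrier M. g \<otimes>\<^bsub>M\<^esub> x = x \<otimes>\<^bsub>M\<^esub> g}"

definition is_p_group_set :: "nat \<Rightarrow> 'a set \<Rightarrow> bool" where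
  "is_p_group_set p S \<longleftrightarrow> finite S \<and> (\<exists>n::nat. card S = p ^ n)"

definition cyclic_graph_vertices :: "('a, 'b) monoid_scheme \<Rightarrow> 'a set" where
  "cyclic_graph_vertices M = carrier M - {\<one>\<^bsub>M\<^esub>}"

definition cyclic_graph_adj :: "('a, 'b) monoid_scheme \<Rightarrow> 'a \<Rightarrow> 'a \<Rightarrow> bool" where
  "cyclic_graph_adj M x y \<longleftrightarrow>
     x \<in> cyclic_graph_vertices M \<and> y \<in> cyclic_graph_vertices M \<and> x \<noteq> y \<and>
     cyclic_group (subgroup_generated M {x, y})"

definition cyclic_graph_connected :: "('a, 'b) monoid_scheme \<Rightarrow> bool" where
  "cyclic_graph_connected M \<longleftrightarrow>
     (\<forall>x \<in> cyclic_graph_vertices M. \<forall>y \<in> cyclic_graph_vertices M.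
        (x, y) \<in> {(a, b). cyclic_graph_adj M a b}\<^sup>*)"

end

theory Submission
  imports Defs
begin

(* Let z = (x, y) have prime order p and a p-group as centralizer. Along any path of the cyclic
   graph starting at z, z stays in the cyclic subgroup generated by the current vertex: if w and v
   are adjacent with z in <w>, then <w, v> = <c> centralizes z, hence is a cyclic p-group, and its
   unique subgroup of order p lies in the nontrivial subgroup <v>. So (x, 1) is not reachable from z.
   Conversely, if no prime admits such elements in both factors, every vertex reaches, through a
   power of prime order and possibly a commuting element of another prime order, an element of
   prime order on one of the axes G x 1 and 1 x H; these are linked by commuting elements of
   coprime orders, so the graph is connected. *)

lemma prime_factor_ne_if_not_prime_power:
  fixes n p :: nat
  assumes "n \<noteq> 0" and "\<nexists>k. n = p ^ k"
  obtains q where "Factorial_Ring.prime q" "q dvd n" "q \<noteq> p"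
proof (cases "p = 1")
  case True
  then have "n \<noteq> 1"
    using assms(2) by auto
  then obtain q where "Factorial_Ring.prime q" "q dvd n"
    using prime_factor_nat by blast
  moreover have "q \<noteq> p"
    using calculation(1) True by auto
  ultimately show thesis
    using that by blast
next
  case False
  obtain y where y: "n = p ^ multiplicity p n * y" "\<not> p dvd y"
    using multiplicity_decompose'[of n p] assms(1) False by auto
  then have "y \<noteq> 1"
    using assms(2) by auto
  then obtain q where "Factorial_Ring.prime q" "q dvd y"
    using prime_factor_nat by blast
  with y show thesis
    using that by (metis dvd_mult)
qed

context group
begin

lemma subgroup_elem_centralizer:
  assumes "x \<in> carrier G"
  shows "subgroup (elem_centralizer G x) G"
proof (rule subgroupI)
  fix a assume "a \<in> elem_centralizer G x"
  then have a: "a \<in> carrier G" "a \<otimes> x = x \<otimes> a"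
    by (auto simp: elem_centralizer_def)
  have "inv a \<otimes> (a \<otimes> x) = x"
    using a(1) assms by (simp flip: m_assoc)
  then have "x \<otimes> inv a = inv a \<otimes> (x \<otimes> a) \<otimes> inv a"
    using a(2) by simp
  also have "\<dots> = inv a \<otimes> x"
    using a assms by (simp add: m_assoc)
  finally have "x \<otimes> inv a = inv a \<otimes> x" .
  with a show "inv a \<in> elem_centralizer G x"
    by (simp add: elem_centralizer_def)
next
  fix a b assume "a \<in> elem_centralizer G x" "b \<in> elem_centralizer G x"
  then have ab: "a \<in> carrier G" "b \<in> carrier G" "a \<otimes> x = x \<otimes> a" "b \<otimes> x = x \<otimes> b"
    by (auto simp: elem_centralizer_def)
  have "a \<otimes> b \<otimes> x = a \<otimes> x \<otimes> b"
    using ab(1,2,4) assms by (simp add: m_assoc)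
  also have "\<dots> = x \<otimes> a \<otimes> b"
    by (simp only: ab(3))
  also have "\<dots> = x \<otimes> (a \<otimes> b)"
    using ab assms by (simp add: m_assoc)
  finally have "a \<otimes> b \<otimes> x = x \<otimes> (a \<otimes> b)" .
  with ab show "a \<otimes> b \<in> elem_centralizer G x"
    by (simp add: elem_centralizer_def)
qed (use assms in \<open>auto simp: elem_centralizer_def\<close>)

lemma card_subgroup_dvd:
  assumes "subgroup H G" "subgroup K G" "H \<subseteq> K"
  shows "card H dvd card K"
proof -
  interpret K: group "subgroup_generated G K"
    by simp
  have "subgroup H (subgroup_generated G K)"
    using assms by (simp add: subgroup_of_subgroup_generated)
  then have "card (rcosets\<^bsub>subgroup_generated G K\<^esub> H) * card H = order (subgroup_generated G K)"
    by (rule K.lagrange)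
  moreover have "order (subgroup_generated G K) = card K"
    using subgroup.carrier_subgroup_generated_subgroup[OF assms(2)] by (simp add: order_def)
  ultimately show ?thesis
    by (metis dvd_triv_right)
qed

lemma ord_dvd_card_subgroup:
  assumes "subgroup K G" "x \<in> K"
  shows "ord x dvd card K"
proof -
  have "x \<in> carrier G"
    using assms(1,2) by (rule subgroup.mem_carrier)
  moreover have "generate G {x} \<subseteq> K"
    using assms by (intro generate_subgroup_incl) auto
  ultimately show ?thesis
    unfolding generate_pow_card[OF \<open>x \<in> carrier G\<close>]
    using card_subgroup_dvd[OF generate_is_subgroup assms(1)] by blast
qed

lemma generate_singleton_subset:
  assumes "c \<in> carrier G" "x \<in> generate G {c}"
  shows "generate G {x} \<subseteq> generate G {c}"
  using assms by (simp add: generate_is_subgroup generate_subgroup_incl)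

lemma ord_dvd_ord_of_mem_generate:
  assumes "c \<in> carrier G" "x \<in> generate G {c}"
  shows "ord x dvd ord c"
  unfolding generate_pow_card[OF assms(1)]
  using assms by (intro ord_dvd_card_subgroup generate_is_subgroup) auto

lemma exists_ord_eq_prime_in_subgroup:
  assumes "finite (carrier G)" "subgroup K G" "Factorial_Ring.prime p" "p dvd card K"
  obtains x where "x \<in> K" "ord x = p"
proof -
  interpret K: group "subgroup_generated G K"
    by simp
  have carrier_K: "carrier (subgroup_generated G K) = K"
    using assms(2) by (rule subgroup.carrier_subgroup_generated_subgroup)
  have "finite K"
    using assms(1,2) finite_subset subgroup.subset by blast
  obtain m where "card K = p * m"
    using assms(4) by blast
  then obtain P where P: "subgroup P (subgroup_generated G K)" "card P = p"
    using sylow_thm[OF assms(3) K.is_group, of 1 m] carrier_K \<open>finite K\<close> by (auto simp: order_def)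
  then have "subgroup P G" "P \<subseteq> K"
    using subgroup_subgroup_generated_iff carrier_K by auto
  have "\<not> P \<subseteq> {\<one>}"
    using card_mono[of "{\<one>}" P] P(2) prime_gt_1_nat[OF assms(3)] by auto
  then obtain x where x: "x \<in> P" "x \<noteq> \<one>"
    by blast
  moreover have "x \<in> carrier G"
    using \<open>subgroup P G\<close> x(1) by (rule subgroup.mem_carrier)
  ultimately have "ord x dvd p" "ord x \<noteq> 1"
    using ord_dvd_card_subgroup[OF \<open>subgroup P G\<close>] P(2) ord_eq_1 by auto
  then have "ord x = p"
    using assms(3) prime_nat_iff by blast
  with x \<open>P \<subseteq> K\<close> show thesis
    using that by blast
qed

lemma exists_prime_ord_ne_in_subgroup:
  assumes "finite (carrier G)" "subgroup K G" "\<not> is_p_group_set p K"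
  obtains x where "x \<in> K" "Factorial_Ring.prime (ord x)" "ord x \<noteq> p"
proof -
  have "finite K"
    using assms(1,2) finite_subset subgroup.subset by blast
  moreover have "card K \<noteq> 0"
    using calculation assms(2) subgroup.one_closed by (metis card_0_eq empty_iff)
  ultimately obtain q where "Factorial_Ring.prime q" "q dvd card K" "q \<noteq> p"
    using prime_factor_ne_if_not_prime_power assms(3) unfolding is_p_group_set_def by blast
  then show thesis
    using exists_ord_eq_prime_in_subgroup[OF assms(1,2)] that by metis
qed

lemma ord_pow_ord_div_prime:
  assumes "finite (carrier G)" "x \<in> carrier G" "Factorial_Ring.prime q" "q dvd ord x"
  shows "ord (x [^] (ord x div q)) = q"
proof -
  have "ord x \<noteq> 0"
    using ord_ge_1[OF assms(1,2)] by simp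
  then have "ord x div q dvd ord x" "ord x div q \<noteq> 0"
    using assms(3,4) by (auto simp: dvd_div_eq_0_iff)
  then show ?thesis
    using ord_pow[OF assms(2)] assms(3,4) \<open>ord x \<noteq> 0\<close>
    by (metis dvd_div_mult_self nonzero_mult_div_cancel_left)
qed

lemma exists_prime_ord:
  assumes "finite (carrier G)" "carrier G \<noteq> {\<one>}"
  obtains x where "x \<in> carrier G" "Factorial_Ring.prime (ord x)"
proof -
  obtain y where y: "y \<in> carrier G" "y \<noteq> \<one>"
    using assms(2) by blast
  then obtain q where "Factorial_Ring.prime q" "q dvd ord y"
    using ord_eq_1 prime_factor_nat by blast
  then show thesis
    using that[of "y [^] (ord y div q)"] ord_pow_ord_div_prime[OF assms(1)] y by simp
qed

lemma cyclic_group_subgroup_generated_iff: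
  assumes "S \<subseteq> carrier G"
  shows "cyclic_group (subgroup_generated G S) \<longleftrightarrow> (\<exists>c \<in> carrier G. generate G S = generate G {c})"
proof
  assume "cyclic_group (subgroup_generated G S)"
  then obtain c where c: "c \<in> carrier (subgroup_generated G S)"
    "carrier (subgroup_generated G S) = range (\<lambda>n::int. c [^]\<^bsub>subgroup_generated G S\<^esub> n)"
    using group.cyclic_group[OF group_subgroup_generated] by blast
  have "c \<in> carrier G"
    using c(1) carrier_subgroup_generated_subset by blast
  moreover have "generate G S = generate G {c}"
    using c int_pow_subgroup_generated[OF c(1)] generate_pow[OF \<open>c \<in> carrier G\<close>] assms
    by (auto simp: carrier_subgroup_generated Int_absorb1)
  ultimately show "\<exists>c \<in> carrier G. generate G S = generate G {c}"
    by blast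
next
  assume "\<exists>c \<in> carrier G. generate G S = generate G {c}"
  then obtain c where "c \<in> carrier G" "generate G S = generate G {c}"
    by blast
  then have "subgroup_generated G S = subgroup_generated G {c}"
    using assms by (simp add: subgroup_generated_def Int_absorb1)
  then show "cyclic_group (subgroup_generated G S)"
    using cyclic_group_generated by simp
qed

lemma generate_eq_if_ord_eq:
  assumes fin: "finite (carrier G)" and c: "c \<in> carrier G"
    and "x \<in> generate G {c}" "y \<in> generate G {c}" "ord x = ord y"
  shows "generate G {x} = generate G {y}"
proof -
  have "generate G {u} = generate G {c [^] (ord c div ord u)}" if u: "u \<in> generate G {c}" for u
  proof -
    obtain a :: nat where a: "u = c [^] a"
      using u generate_pow_on_finite_carrier[OF fin c] by blast
    then have u_carrier: "u \<in> carrier G"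
      using c by simp
    then have "ord u \<noteq> 0"
      using ord_ge_1[OF fin] by fastforce
    obtain e where e: "ord c = e * ord u"
      using ord_dvd_ord_of_mem_generate[OF c u] by (metis dvd_def mult.commute)
    have "c [^] (a * ord u) = \<one>"
      using a c u_carrier by (simp flip: nat_pow_pow)
    then have "e * ord u dvd a * ord u"
      using pow_eq_id[OF c] e by simp
    then obtain t where "a = e * t"
      using \<open>ord u \<noteq> 0\<close> by auto
    then have "u \<in> generate G {c [^] e}"
      using a c generate_pow_on_finite_carrier[OF fin] by (auto simp: nat_pow_pow)
    then have "generate G {u} \<subseteq> generate G {c [^] e}"
      using c by (simp add: generate_singleton_subset)
    moreover have "ord (c [^] e) = ord u"
      using ord_pow[OF c, of e] e \<open>ord u \<noteq> 0\<close> ord_ge_1[OF fin c] by auto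
    then have "card (generate G {u}) = card (generate G {c [^] e})"
      using c u_carrier by (simp flip: generate_pow_card)
    moreover have "finite (generate G {c [^] e})"
      using c fin generate_incl[of "{c [^] e}"] finite_subset by auto
    ultimately have "generate G {u} = generate G {c [^] e}"
      using card_subset_eq by blast
    with e \<open>ord u \<noteq> 0\<close> show ?thesis
      by simp
  qed
  with assms show ?thesis
    by simp
qed

end

definition cyclic_graph_edges :: "('a, 'b) monoid_scheme \<Rightarrow> ('a \<times> 'a) set" where
  "cyclic_graph_edges M = {(a, b). cyclic_graph_adj M a b}"

lemma sym_cyclic_graph_edges: "sym (cyclic_graph_edges M)"
  by (auto simp: sym_def cyclic_graph_edges_def cyclic_graph_adj_def insert_commute)

lemma cyclic_graph_connected_iff:
  "cyclic_graph_connected M \<longleftrightarrow>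
     (\<forall>x \<in> cyclic_graph_vertices M. \<forall>y \<in> cyclic_graph_vertices M. (x, y) \<in> (cyclic_graph_edges M)\<^sup>*)"
  by (simp add: cyclic_graph_connected_def cyclic_graph_edges_def)

lemma cyclic_graph_connectedI:
  assumes "\<And>x. x \<in> cyclic_graph_vertices M \<Longrightarrow> (x, h) \<in> (cyclic_graph_edges M)\<^sup>*"
  shows "cyclic_graph_connected M"
  unfolding cyclic_graph_connected_iff
  using assms sym_rtrancl[OF sym_cyclic_graph_edges] by (meson rtrancl_trans symD)

context group
begin

lemma cyclic_graph_adjI:
  assumes "x \<in> carrier G" "y \<in> carrier G" "x \<noteq> \<one>" "y \<noteq> \<one>" "x \<noteq> y"
    and "c \<in> carrier G" "generate G {x, y} = generate G {c}"
  shows "cyclic_graph_adj G x y"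
  using assms cyclic_group_subgroup_generated_iff[of "{x, y}"]
  by (auto simp: cyclic_graph_adj_def cyclic_graph_vertices_def)

lemma mem_generate_mult_if_coprime:
  assumes fin: "finite (carrier G)" and u: "u \<in> carrier G" and v: "v \<in> carrier G"
    and comm: "u \<otimes> v = v \<otimes> u" and "coprime (ord u) (ord v)"
  shows "u \<in> generate G {u \<otimes> v}"
proof -
  obtain s t where st: "ord v * s = ord u * t + 1"
    using bezout_nat[of "ord v" "ord u"] ord_ge_1[OF fin v] assms(5)
    by (auto simp: coprime_iff_gcd_eq_1 gcd.commute)
  have "(u \<otimes> v) [^] (ord v * s) = u [^] (ord v * s) \<otimes> v [^] (ord v * s)"
    using comm u v by (rule pow_mult_distrib)
  also have "v [^] (ord v * s) = \<one>"
    using v by (simp flip: nat_pow_pow)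
  also have "u [^] (ord v * s) = u"
    unfolding st using u by (simp flip: nat_pow_mult nat_pow_pow)
  finally have pow: "(u \<otimes> v) [^] (ord v * s) = u"
    using u by simp
  show ?thesis
    unfolding generate_pow_on_finite_carrier[OF fin m_closed[OF u v]]
    by (intro CollectI exI[of _ "ord v * s"]) (simp add: pow)
qed

lemma cyclic_graph_adj_if_coprime_ord:
  assumes fin: "finite (carrier G)" and u: "u \<in> carrier G" "u \<noteq> \<one>" and v: "v \<in> carrier G" "v \<noteq> \<one>"
    and comm: "u \<otimes> v = v \<otimes> u" and cop: "coprime (ord u) (ord v)"
  shows "cyclic_graph_adj G u v"
proof (rule cyclic_graph_adjI)
  show "u \<noteq> v"
    using cop u ord_eq_1 by auto
  have "u \<in> generate G {u \<otimes> v}"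
    using fin u(1) v(1) comm cop by (rule mem_generate_mult_if_coprime)
  moreover have "v \<in> generate G {u \<otimes> v}"
    using mem_generate_mult_if_coprime[OF fin v(1) u(1) comm[symmetric]] cop comm
    by (simp add: coprime_commute)
  moreover have "u \<otimes> v \<in> generate G {u, v}"
    by (simp add: generate.eng generate.incl)
  ultimately show "generate G {u, v} = generate G {u \<otimes> v}"
    using u(1) v(1) by (intro subset_antisym generate_subgroup_incl generate_is_subgroup) auto
qed (use assms in auto)

lemma cyclic_graph_adj_if_prime_ord_ne:
  assumes "finite (carrier G)" "u \<in> carrier G" "v \<in> carrier G" "u \<otimes> v = v \<otimes> u"
    and "Factorial_Ring.prime (ord u)" "Factorial_Ring.prime (ord v)" "ord u \<noteq> ord v"
  shows "cyclic_graph_adj G u v"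
proof -
  have "u \<noteq> \<one>" "v \<noteq> \<one>"
    using assms(5,6) by auto
  with assms show ?thesis
    by (intro cyclic_graph_adj_if_coprime_ord primes_coprime)
qed

lemma cyclic_graph_adj_pow:
  assumes "w \<in> carrier G" "w \<noteq> \<one>" "w [^] (n::nat) \<noteq> \<one>" "w [^] n \<noteq> w"
  shows "cyclic_graph_adj G w (w [^] n)"
proof (rule cyclic_graph_adjI)
  have "w [^] n \<in> generate G {w}"
    unfolding generate_pow[OF assms(1)] by (intro CollectI exI[of _ "int n"]) (simp add: int_pow_int)
  then have "generate G {w, w [^] n} \<subseteq> generate G {w}"
    using assms(1) by (intro generate_subgroup_incl generate_is_subgroup) (auto intro: generate.incl)
  then show "generate G {w, w [^] n} = generate G {w}"
    by (simp add: mono_generate subset_antisym)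
qed (use assms in auto)

lemma cyclic_graph_reaches_prime_ord:
  assumes "finite (carrier G)" "w \<in> carrier G" "w \<noteq> \<one>"
  obtains w' where "w' \<in> carrier G" "Factorial_Ring.prime (ord w')" "(w, w') \<in> (cyclic_graph_edges G)\<^sup>*"
proof -
  obtain q where q: "Factorial_Ring.prime q" "q dvd ord w"
    using assms(2,3) ord_eq_1 prime_factor_nat by blast
  define w' where "w' = w [^] (ord w div q)"
  have "ord w' = q"
    unfolding w'_def using assms(1,2) q by (rule ord_pow_ord_div_prime)
  then have "w' \<noteq> \<one>"
    using q(1) by auto
  then have "(w, w') \<in> (cyclic_graph_edges G)\<^sup>*"
    using cyclic_graph_adj_pow[OF assms(2,3)] unfolding w'_def cyclic_graph_edges_def
    by (cases "w [^] (ord w div q) = w") auto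
  moreover have "w' \<in> carrier G"
    unfolding w'_def using assms(2) by simp
  ultimately show thesis
    using that \<open>ord w' = q\<close> q(1) by blast
qed

lemma mem_generate_if_cyclic_graph_adj:
  assumes fin: "finite (carrier G)" and p: "Factorial_Ring.prime p"
    and z: "z \<in> carrier G" "ord z = p" "is_p_group_set p (elem_centralizer G z)"
    and zw: "z \<in> generate G {w}" and adj: "cyclic_graph_adj G w v"
  shows "z \<in> generate G {v}"
proof -
  have wv: "w \<in> carrier G" "v \<in> carrier G" "v \<noteq> \<one>"
    and "cyclic_group (subgroup_generated G {w, v})"
    using adj by (auto simp: cyclic_graph_adj_def cyclic_graph_vertices_def)
  then obtain c where c: "c \<in> carrier G" "generate G {w, v} = generate G {c}"
    using cyclic_group_subgroup_generated_iff[of "{w, v}"] by auto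
  then have "z \<in> generate G {c}" "v \<in> generate G {c}"
    using zw mono_generate[of "{w}" "{w, v}"] by (auto intro: generate.incl)
  then obtain a :: nat where "z = c [^] a"
    using generate_pow_on_finite_carrier[OF fin c(1)] by blast
  then have "c \<otimes> z = z \<otimes> c"
    using c(1) by (simp only: flip: nat_pow_Suc nat_pow_Suc2)
  then have "c \<in> elem_centralizer G z"
    using c(1) by (simp add: elem_centralizer_def)
  then obtain m where "ord c dvd p ^ m"
    using ord_dvd_card_subgroup[OF subgroup_elem_centralizer[OF z(1)]] z(3)
    unfolding is_p_group_set_def by metis
  then have "ord v dvd p ^ m"
    using ord_dvd_ord_of_mem_generate[OF c(1) \<open>v \<in> generate G {c}\<close>] by (rule dvd_trans[rotated])
  moreover have "ord v \<noteq> 1"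
    using wv ord_eq_1 by blast
  ultimately have "p dvd ord v"
    using p by (auto simp: divides_primepow_nat)
  define v' where "v' = v [^] (ord v div p)"
  have "ord v' = p"
    unfolding v'_def using fin wv(2) p \<open>p dvd ord v\<close> by (rule ord_pow_ord_div_prime)
  have "v' \<in> generate G {v}"
    unfolding v'_def generate_pow_on_finite_carrier[OF fin wv(2)] by blast
  moreover have "generate G {v} \<subseteq> generate G {c}"
    using c(1) \<open>v \<in> generate G {c}\<close> by (rule generate_singleton_subset)
  ultimately have "generate G {z} = generate G {v'}"
    using generate_eq_if_ord_eq[OF fin c(1) \<open>z \<in> generate G {c}\<close>] \<open>ord v' = p\<close> z(2) by blast
  moreover have "generate G {v'} \<subseteq> generate G {v}"
    using wv(2) \<open>v' \<in> generate G {v}\<close> by (rule generate_singleton_subset)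
  ultimately show ?thesis
    using generate.incl[of z "{z}"] by blast
qed

lemma mem_generate_if_cyclic_graph_reach:
  assumes "finite (carrier G)" "Factorial_Ring.prime p"
    and "z \<in> carrier G" "ord z = p" "is_p_group_set p (elem_centralizer G z)"
    and "(z, v) \<in> (cyclic_graph_edges G)\<^sup>*"
  shows "z \<in> generate G {v}"
  using assms(6)
proof (induction rule: rtrancl_induct)
  case base
  then show ?case
    by (simp add: generate.incl)
next
  case (step w v)
  then show ?case
    using mem_generate_if_cyclic_graph_adj[OF assms(1-5)] by (simp add: cyclic_graph_edges_def)
qed

end

lemma pow_DirProd: "(a, b) [^]\<^bsub>G \<times>\<times> H\<^esub> (n::nat) = (a [^]\<^bsub>G\<^esub> n, b [^]\<^bsub>H\<^esub> n)"
  by (induction n) auto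

lemma ord_DirProd:
  assumes "group G" "group H" "a \<in> carrier G" "b \<in> carrier H"
  shows "group.ord (G \<times>\<times> H) (a, b) = lcm (group.ord G a) (group.ord H b)"
proof -
  interpret GH: group "G \<times>\<times> H"
    using assms(1,2) by (rule DirProd_group)
  show ?thesis
    using assms by (simp add: GH.ord_unique pow_DirProd group.pow_eq_id)
qed

lemma elem_centralizer_DirProd:
  "elem_centralizer (G \<times>\<times> H) (x, y) = elem_centralizer G x \<times> elem_centralizer H y"
  by (auto simp: elem_centralizer_def)

lemma is_p_group_set_Times:
  assumes "is_p_group_set p A" "is_p_group_set p B"
  shows "is_p_group_set p (A \<times> B)"
  using assms by (auto simp: is_p_group_set_def card_cartesian_product simp flip: power_add)

locale finite_group_pair = G: group G + H: group H
  for G :: "('a, 'c) monoid_scheme" and H :: "('b, 'd) monoid_scheme" +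
  assumes finite_G: "finite (carrier G)" and finite_H: "finite (carrier H)"
begin

sublocale GH: group "G \<times>\<times> H"
  by (rule DirProd_group) (rule G.is_group, rule H.is_group)

lemma finite_GH: "finite (carrier (G \<times>\<times> H))"
  using finite_G finite_H by simp

lemma ord_GH: "a \<in> carrier G \<Longrightarrow> b \<in> carrier H \<Longrightarrow> GH.ord (a, b) = lcm (G.ord a) (H.ord b)"
  by (rule ord_DirProd) (rule G.is_group, rule H.is_group)

definition coordinate_axes :: "('a \<times> 'b) set" where
  "coordinate_axes = carrier G \<times> {\<one>\<^bsub>H\<^esub>} \<union> {\<one>\<^bsub>G\<^esub>} \<times> carrier H"

lemma not_cyclic_graph_connected_DirProd:
  assumes p: "Factorial_Ring.prime p"
    and x: "x \<in> carrier G" "G.ord x = p" "is_p_group_set p (elem_centralizer G x)"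
    and y: "y \<in> carrier H" "H.ord y = p" "is_p_group_set p (elem_centralizer H y)"
  shows "\<not> cyclic_graph_connected (G \<times>\<times> H)"
proof
  assume "cyclic_graph_connected (G \<times>\<times> H)"
  moreover have "x \<noteq> \<one>\<^bsub>G\<^esub>" "y \<noteq> \<one>\<^bsub>H\<^esub>"
    using x(1,2) y(1,2) prime_gt_1_nat[OF p] G.ord_eq_1 H.ord_eq_1 by auto
  ultimately have "((x, y), (x, \<one>\<^bsub>H\<^esub>)) \<in> (cyclic_graph_edges (G \<times>\<times> H))\<^sup>*"
    using x(1) y(1) by (auto simp: cyclic_graph_connected_iff cyclic_graph_vertices_def)
  moreover have "GH.ord (x, y) = p"
    using x y by (simp add: ord_GH)
  moreover have "is_p_group_set p (elem_centralizer (G \<times>\<times> H) (x, y))"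
    using x y by (simp add: elem_centralizer_DirProd is_p_group_set_Times)
  ultimately have "(x, y) \<in> generate (G \<times>\<times> H) {(x, \<one>\<^bsub>H\<^esub>)}"
    using GH.mem_generate_if_cyclic_graph_reach[OF finite_GH p] x(1) y(1) by simp
  moreover have "subgroup (carrier G \<times> {\<one>\<^bsub>H\<^esub>}) (G \<times>\<times> H)"
    using DirProd_subgroups[OF G.is_group G.subgroup_self H.is_group H.triv_subgroup] .
  then have "generate (G \<times>\<times> H) {(x, \<one>\<^bsub>H\<^esub>)} \<subseteq> carrier G \<times> {\<one>\<^bsub>H\<^esub>}"
    using x(1) by (intro GH.generate_subgroup_incl) auto
  ultimately show False
    using \<open>y \<noteq> \<one>\<^bsub>H\<^esub>\<close> by auto
qed

lemma exists_commuting_axis_elem: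
  assumes "a \<in> carrier G" "b \<in> carrier H"
    and "\<not> is_p_group_set p (elem_centralizer G a) \<or> \<not> is_p_group_set p (elem_centralizer H b)"
  obtains e where "e \<in> coordinate_axes" "Factorial_Ring.prime (GH.ord e)" "GH.ord e \<noteq> p"
    "fst e \<otimes>\<^bsub>G\<^esub> a = a \<otimes>\<^bsub>G\<^esub> fst e" "snd e \<otimes>\<^bsub>H\<^esub> b = b \<otimes>\<^bsub>H\<^esub> snd e"
  using assms(3)
proof
  assume "\<not> is_p_group_set p (elem_centralizer G a)"
  then obtain c where "c \<in> elem_centralizer G a" "Factorial_Ring.prime (G.ord c)" "G.ord c \<noteq> p"
    using G.exists_prime_ord_ne_in_subgroup[OF finite_G G.subgroup_elem_centralizer[OF assms(1)]] by blast
  then show thesis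
    using that[of "(c, \<one>\<^bsub>H\<^esub>)"] assms(2) by (simp add: ord_GH elem_centralizer_def coordinate_axes_def)
next
  assume "\<not> is_p_group_set p (elem_centralizer H b)"
  then obtain d where "d \<in> elem_centralizer H b" "Factorial_Ring.prime (H.ord d)" "H.ord d \<noteq> p"
    using H.exists_prime_ord_ne_in_subgroup[OF finite_H H.subgroup_elem_centralizer[OF assms(2)]] by blast
  then show thesis
    using that[of "(\<one>\<^bsub>G\<^esub>, d)"] assms(1) by (simp add: ord_GH elem_centralizer_def coordinate_axes_def)
qed

context
  assumes no_pair: "\<And>p x y. Factorial_Ring.prime p \<Longrightarrow> x \<in> carrier G \<Longrightarrow> y \<in> carrier H \<Longrightarrow>
      G.ord x = p \<Longrightarrow> H.ord y = p \<Longrightarrow>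
      \<not> is_p_group_set p (elem_centralizer G x) \<or> \<not> is_p_group_set p (elem_centralizer H y)"
begin

lemma cyclic_graph_reaches_coordinate_axes:
  assumes w: "w \<in> cyclic_graph_vertices (G \<times>\<times> H)"
  obtains e where "e \<in> coordinate_axes" "Factorial_Ring.prime (GH.ord e)"
    "(w, e) \<in> (cyclic_graph_edges (G \<times>\<times> H))\<^sup>*"
proof -
  have "w \<in> carrier (G \<times>\<times> H)" "w \<noteq> \<one>\<^bsub>G \<times>\<times> H\<^esub>"
    using w by (auto simp: cyclic_graph_vertices_def)
  then obtain w' where w': "w' \<in> carrier (G \<times>\<times> H)" "Factorial_Ring.prime (GH.ord w')"
    and path: "(w, w') \<in> (cyclic_graph_edges (G \<times>\<times> H))\<^sup>*"
    by (rule GH.cyclic_graph_reaches_prime_ord[OF finite_GH])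
  show thesis
  proof (cases "w' \<in> coordinate_axes")
    case True
    with w' path that show thesis
      by blast
  next
    case False
    obtain a b where ab: "w' = (a, b)" "a \<in> carrier G" "b \<in> carrier H"
      using w'(1) by auto
    define p where "p = GH.ord w'"
    have p: "Factorial_Ring.prime p"
      using w'(2) by (simp add: p_def)
    have "G.ord a dvd p" "H.ord b dvd p" "G.ord a \<noteq> 1" "H.ord b \<noteq> 1"
      using False ab G.ord_eq_1 H.ord_eq_1 by (auto simp: p_def ord_GH coordinate_axes_def)
    then have "G.ord a = p" "H.ord b = p"
      using p prime_nat_iff by metis+
    then obtain e where e: "e \<in> coordinate_axes" "Factorial_Ring.prime (GH.ord e)" "GH.ord e \<noteq> p"
      "fst e \<otimes>\<^bsub>G\<^esub> a = a \<otimes>\<^bsub>G\<^esub> fst e" "snd e \<otimes>\<^bsub>H\<^esub> b = b \<otimes>\<^bsub>H\<^esub> snd e"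
      using exists_commuting_axis_elem[OF ab(2,3)] no_pair[OF p ab(2,3)] by metis
    then have "cyclic_graph_adj (G \<times>\<times> H) w' e"
      using ab w'(2) p_def
      by (intro GH.cyclic_graph_adj_if_prime_ord_ne[OF finite_GH]) (auto simp: coordinate_axes_def)
    then have "(w', e) \<in> cyclic_graph_edges (G \<times>\<times> H)"
      by (simp add: cyclic_graph_edges_def)
    with path have "(w, e) \<in> (cyclic_graph_edges (G \<times>\<times> H))\<^sup>*"
      by simp
    with e(1,2) that show thesis
      by blast
  qed
qed

lemma cyclic_graph_reach_between_axes:
  assumes a: "a \<in> carrier G" "Factorial_Ring.prime (G.ord a)"
    and b: "b \<in> carrier H" "Factorial_Ring.prime (H.ord b)"
  shows "((a, \<one>\<^bsub>H\<^esub>), (\<one>\<^bsub>G\<^esub>, b)) \<in> (cyclic_graph_edges (G \<times>\<times> H))\<^sup>*"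
proof (cases "G.ord a = H.ord b")
  case False
  then have "cyclic_graph_adj (G \<times>\<times> H) (a, \<one>\<^bsub>H\<^esub>) (\<one>\<^bsub>G\<^esub>, b)"
    using a b by (intro GH.cyclic_graph_adj_if_prime_ord_ne[OF finite_GH]) (auto simp: ord_GH)
  then show ?thesis
    by (simp add: cyclic_graph_edges_def r_into_rtrancl)
next
  case True
  obtain e where e: "e \<in> coordinate_axes" "Factorial_Ring.prime (GH.ord e)" "GH.ord e \<noteq> G.ord a"
    "fst e \<otimes>\<^bsub>G\<^esub> a = a \<otimes>\<^bsub>G\<^esub> fst e" "snd e \<otimes>\<^bsub>H\<^esub> b = b \<otimes>\<^bsub>H\<^esub> snd e"
    using exists_commuting_axis_elem[OF a(1) b(1)] no_pair[OF a(2) a(1) b(1) refl True[symmetric]]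
    by metis
  have "cyclic_graph_adj (G \<times>\<times> H) (a, \<one>\<^bsub>H\<^esub>) e" "cyclic_graph_adj (G \<times>\<times> H) e (\<one>\<^bsub>G\<^esub>, b)"
    using e a b True
    by (auto intro!: GH.cyclic_graph_adj_if_prime_ord_ne[OF finite_GH] simp: ord_GH coordinate_axes_def)
  then have "((a, \<one>\<^bsub>H\<^esub>), e) \<in> cyclic_graph_edges (G \<times>\<times> H)"
    "(e, (\<one>\<^bsub>G\<^esub>, b)) \<in> cyclic_graph_edges (G \<times>\<times> H)"
    by (simp_all add: cyclic_graph_edges_def)
  then show ?thesis
    by (rule converse_rtrancl_into_rtrancl[OF _ r_into_rtrancl])
qed

lemma cyclic_graph_connected_DirProd:
  assumes "carrier G \<noteq> {\<one>\<^bsub>G\<^esub>}" "carrier H \<noteq> {\<one>\<^bsub>H\<^esub>}"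
  shows "cyclic_graph_connected (G \<times>\<times> H)"
proof -
  obtain g where g: "g \<in> carrier G" "Factorial_Ring.prime (G.ord g)"
    using G.exists_prime_ord[OF finite_G assms(1)] .
  obtain h where h: "h \<in> carrier H" "Factorial_Ring.prime (H.ord h)"
    using H.exists_prime_ord[OF finite_H assms(2)] .
  have hub: "(e, (\<one>\<^bsub>G\<^esub>, h)) \<in> (cyclic_graph_edges (G \<times>\<times> H))\<^sup>*"
    if e: "e \<in> coordinate_axes" "Factorial_Ring.prime (GH.ord e)" for e
  proof -
    consider a where "e = (a, \<one>\<^bsub>H\<^esub>)" "a \<in> carrier G" | b where "e = (\<one>\<^bsub>G\<^esub>, b)" "b \<in> carrier H"
      using e(1) by (auto simp: coordinate_axes_def)
    then show ?thesis
    proof cases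
      case 1
      then show ?thesis
        using e(2) h cyclic_graph_reach_between_axes by (simp add: ord_GH)
    next
      case 2
      then have "((g, \<one>\<^bsub>H\<^esub>), e) \<in> (cyclic_graph_edges (G \<times>\<times> H))\<^sup>*"
        using e(2) g cyclic_graph_reach_between_axes by (simp add: ord_GH)
      then have "(e, (g, \<one>\<^bsub>H\<^esub>)) \<in> (cyclic_graph_edges (G \<times>\<times> H))\<^sup>*"
        using sym_rtrancl[OF sym_cyclic_graph_edges] by (rule symD[rotated])
      then show ?thesis
        using cyclic_graph_reach_between_axes[OF g h] by (rule rtrancl_trans)
    qed
  qed
  show ?thesis
  proof (rule cyclic_graph_connectedI)
    fix w
    assume "w \<in> cyclic_graph_vertices (G \<times>\<times> H)"
    then obtain e where "e \<in> coordinate_axes" "Factorial_Ring.prime (GH.ord e)"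
      "(w, e) \<in> (cyclic_graph_edges (G \<times>\<times> H))\<^sup>*"
      by (rule cyclic_graph_reaches_coordinate_axes)
    then show "(w, (\<one>\<^bsub>G\<^esub>, h)) \<in> (cyclic_graph_edges (G \<times>\<times> H))\<^sup>*"
      using hub by (meson rtrancl_trans)
  qed
qed

end

end

theorem corollary4p6:
  fixes G :: "('a, 'c) monoid_scheme" and H :: "('b, 'd) monoid_scheme"
  assumes "group G" and "group H"
    and "finite (carrier G)" and "finite (carrier H)"
    and "carrier G \<noteq> {\<one>\<^bsub>G\<^esub>}" and "carrier H \<noteq> {\<one>\<^bsub>H\<^esub>}"
  shows "\<not> cyclic_graph_connected (G \<times>\<times> H) \<longleftrightarrow>
    (\<exists>p::nat. Factorial_Ring.prime p \<and>
       (\<exists>x \<in> carrier G. group.ord G x = p \<and> is_p_group_set p (elem_centralizer G x)) \<and>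
       (\<exists>y \<in> carrier H. group.ord H y = p \<and> is_p_group_set p (elem_centralizer H y)))"
proof -
  interpret finite_group_pair G H
    using assms(1-4) by (simp add: finite_group_pair_def finite_group_pair_axioms_def)
  show ?thesis
  proof
    assume "\<not> cyclic_graph_connected (G \<times>\<times> H)"
    then show "\<exists>p. Factorial_Ring.prime p \<and>
       (\<exists>x \<in> carrier G. G.ord x = p \<and> is_p_group_set p (elem_centralizer G x)) \<and>
       (\<exists>y \<in> carrier H. H.ord y = p \<and> is_p_group_set p (elem_centralizer H y))"
      using cyclic_graph_connected_DirProd[OF _ assms(5,6)] by blast
  next
    assume "\<exists>p. Factorial_Ring.prime p \<and>
       (\<exists>x \<in> carrier G. G.ord x = p \<and> is_p_group_set p (elem_centralizer G x)) \<and>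
       (\<exists>y \<in> carrier H. H.ord y = p \<and> is_p_group_set p (elem_centralizer H y))"
    then show "\<not> cyclic_graph_connected (G \<times>\<times> H)"
      using not_cyclic_graph_connected_DirProd by blast
  qed
qed

end
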